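(* Let $\gamma>0$ and let $S\subset(0,1)$ be a set of size $d$, and let $\mathbf{x}\in[0,1]^d$ list the elements of $S$ in a uniformly random order. Then the following procedure is "successful" with probability at least $1-\exp(-\Omega(d^{2\gamma}))$, and whenever it is successful it outputs $\operatorname{med}(\mathbf{x})$. Procedure: (1) partition the $d$ entries of $\mathbf{x}$ into consecutive blocks $\mathbf{x}_1,\dots,\mathbf{x}_q$ of size $\lceil d^{2/3}\rceil$ (the last block possibly smaller); for $i\in[q-1]$ let $\mathbf{y}_i$ consist of the elements of $\mathbf{x}_i$ whose ranks within $\mathbf{x}_i$ belong to $\{\lfloor \frac{d^{2/3}}{2}-d^{\frac13+\gamma}\rfloor,\dots,\lceil \frac{d^{2/3}}{2}+d^{\frac13+\gamma}\rceil\}$, and let $\mathbf{y}_q=\mathbf{x}_q$; (2) compare each entry of the concatenation $(\mathbf{y}_1,\dots,\mathbf{y}_q)$ with all entries of $\mathbf{x}$, and output the entry that is larger than exactly $d/2-1$ entries of $\mathbf{x}$ (if none exists, the procedure fails). The procedure is called successful if some $\mathbf{y}_i$, $i\in[q]$, contains $\operatorname{med}(\mathbf{x})$.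
   Context: $\operatorname{med}(\mathbf{x})$ denotes the median of the entries of $\mathbf{x}$ (the element of rank $d/2$ in ascending order). Ranks are positions in ascending sorted order. *)

theory Defs
  imports Complex_Main "HOL-Combinatorics.Multiset_Permutations"
begin

text \<open>Median: the element of rank ceil(d/2) (1-indexed, ascending order) of a list of
  length d; for even d this is the element of rank d/2.\<close>
definition med :: "real list \<Rightarrow> real" where
  "med xs = sort xs ! ((length xs - 1) div 2)"

definition rank_in :: "real list \<Rightarrow> real \<Rightarrow> nat" where
  "rank_in ys v = card {u \<in> set ys. u \<le> v}"

definition blksz :: "nat \<Rightarrow> nat" where
  "blksz d = nat \<lceil>real d powr (2/3)\<rceil>"

definition nblocks :: "nat \<Rightarrow> nat" where
  "nblocks d = (d + blksz d - 1) div blksz d"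

text \<open>The i-th block (0-indexed, i < nblocks d) of consecutive entries.\<close>
definition blk :: "real list \<Rightarrow> nat \<Rightarrow> real list" where
  "blk xs i = take (blksz (length xs)) (drop (i * blksz (length xs)) xs)"

definition win_lo :: "real \<Rightarrow> nat \<Rightarrow> int" where
  "win_lo \<gamma> d = \<lfloor>real d powr (2/3) / 2 - real d powr (1/3 + \<gamma>)\<rfloor>"

definition win_hi :: "real \<Rightarrow> nat \<Rightarrow> int" where
  "win_hi \<gamma> d = \<lceil>real d powr (2/3) / 2 + real d powr (1/3 + \<gamma>)\<rceil>"

definition yblk :: "real \<Rightarrow> real list \<Rightarrow> nat \<Rightarrow> real list" where
  "yblk \<gamma> xs i =
     (if i + 1 = nblocks (length xs) then blk xs i
      else filter (\<lambda>v. win_lo \<gamma> (length xs) \<le> int (rank_in (blk xs i) v)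
                       \<and> int (rank_in (blk xs i) v) \<le> win_hi \<gamma> (length xs)) (blk xs i))"

text \<open>Output of the procedure: the first entry of (y_1,...,y_q) larger than exactly
  ceil(d/2) - 1 entries of xs (= d/2 - 1 for even d); None means failure.\<close>
definition proc_output :: "real \<Rightarrow> real list \<Rightarrow> real option" where
  "proc_output \<gamma> xs =
     find (\<lambda>v. card {u \<in> set xs. u < v} = (length xs + 1) div 2 - 1)
          (concat (map (yblk \<gamma> xs) [0..<nblocks (length xs)]))"

definition successful :: "real \<Rightarrow> real list \<Rightarrow> bool" where
  "successful \<gamma> xs = (\<exists>i < nblocks (length xs). med xs \<in> set (yblk \<gamma> xs i))"

end

theory Submission
  imports Defs "HOL-Real_Asymp.Real_Asymp"
begin

text \<open>
  Let M be the median of x and m = \<lceil>d^(2/3)\<rceil> the block size. If the procedure is not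
  successful, M lies in a block x_i other than the last one, but its rank within x_i falls outside
  the window; hence x_i contains at least m/2 + t elements below M or at least as many above M,
  where t = d^(1/3 + \<gamma>). For a uniformly random order the entries of a fixed block form a uniformly
  random m-subset of S, so the number of them in a fixed half of S is hypergeometric. Beyond the
  middle, consecutive hypergeometric terms shrink by the factor (m - j)/(j + 1) < 1, which gives
  a tail bound exp(-\<Omega>(t^2/m)) = exp(-\<Omega>(d^(2\<gamma>))); a union bound over the fewer than d blocks
  costs only a polynomial factor. Conversely, since the entries are distinct, the median is the
  only entry with exactly \<lceil>d/2\<rceil> - 1 smaller entries, so a successful run outputs it.
\<close>

section \<open>Tails of products of binomial coefficients\<close>

lemma binomial_product_Suc_le:
  fixes K H m j :: nat
  assumes "K \<le> H + 2" "m + 1 \<le> 2 * j" "j < m"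
  shows "(K choose Suc j) * (H choose (m - Suc j)) * Suc j \<le> (K choose j) * (H choose (m - j)) * (m - j)"
proof (cases "m - Suc j \<le> H")
  case False
  then show ?thesis
    by (simp add: binomial_eq_0)
next
  case True
  have K: "Suc j * (K choose Suc j) = (K - j) * (K choose j)"
    by (simp only: binomial_absorption binomial_absorb_comp)
  have "m - j = Suc (m - Suc j)"
    using assms(3) by simp
  then have H: "(m - j) * (H choose (m - j)) = (H - (m - Suc j)) * (H choose (m - Suc j))"
    by (simp only: binomial_absorption binomial_absorb_comp)
  have "K - j \<le> H - (m - Suc j)"
    using assms True by linarith
  have "(K choose Suc j) * (H choose (m - Suc j)) * Suc j
      = (Suc j * (K choose Suc j)) * (H choose (m - Suc j))"
    by (simp only: ac_simps)
  also have "\<dots> = (K - j) * ((K choose j) * (H choose (m - Suc j)))"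
    by (simp only: K ac_simps)
  also have "\<dots> \<le> (H - (m - Suc j)) * ((K choose j) * (H choose (m - Suc j)))"
    using \<open>K - j \<le> H - (m - Suc j)\<close> by (rule mult_right_mono) simp
  also have "\<dots> = (K choose j) * ((m - j) * (H choose (m - j)))"
    by (simp only: H ac_simps)
  finally show ?thesis
    by (simp only: ac_simps)
qed

lemma binomial_product_le_geometric:
  fixes K H m j0 j :: nat
  assumes "K \<le> H + 2" "m + 1 \<le> 2 * j0" "j0 \<le> j" "j \<le> m"
  shows "real ((K choose j) * (H choose (m - j)))
         \<le> real ((K choose j0) * (H choose (m - j0))) * ((real m - j0) / (j0 + 1)) ^ (j - j0)"
  using assms(3,4)
proof (induction j rule: dec_induct)
  case base
  then show ?case
    by simp
next
  case (step n)
  define f where "f = (\<lambda>j. real ((K choose j) * (H choose (m - j))))"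
  define \<rho> where "\<rho> = (real m - j0) / (j0 + 1)"
  have "\<rho> \<ge> 0"
    unfolding \<rho>_def using step.hyps assms(4) by simp
  have "(K choose Suc n) * (H choose (m - Suc n)) * Suc n \<le> (K choose n) * (H choose (m - n)) * (m - n)"
    using binomial_product_Suc_le[of K H m n] assms(1,2,4) step.hyps by simp
  then have "f (Suc n) * Suc n \<le> f n * real (m - n)"
    unfolding f_def by (simp only: of_nat_mult [symmetric] of_nat_le_iff)
  then have "f (Suc n) \<le> f n * ((real m - n) / (n + 1))"
    using step.hyps assms(4) by (simp add: field_simps of_nat_diff)
  also have "\<dots> \<le> f n * \<rho>"
  proof (rule mult_left_mono)
    have "real j0 * (m + 1) \<le> real n * (m + 1)"
      using step.hyps by (intro mult_right_mono) auto
    then have "(real m - n) * (j0 + 1) \<le> (real m - j0) * (n + 1)"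
      by (simp add: algebra_simps)
    then show "(real m - n) / (n + 1) \<le> \<rho>"
      unfolding \<rho>_def by (simp add: divide_simps)
  qed (simp add: f_def)
  also have "\<dots> \<le> f j0 * \<rho> ^ (n - j0) * \<rho>"
    using step.IH step.hyps assms(4) \<open>\<rho> \<ge> 0\<close> by (intro mult_right_mono) (auto simp: f_def \<rho>_def)
  also have "\<dots> = f j0 * \<rho> ^ (Suc n - j0)"
    using step.hyps by (simp add: Suc_diff_le mult.assoc)
  finally show ?case
    unfolding f_def \<rho>_def .
qed

lemma binomial_product_tail_le_geometric:
  fixes K H m j0 a :: nat
  assumes "K \<le> H + 2" "m + 1 \<le> 2 * j0" "j0 \<le> a" "a \<le> m"
  shows "real (\<Sum>j = a..m. (K choose j) * (H choose (m - j)))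
         \<le> (real m + 1) * real ((K + H) choose m) * ((real m - j0) / (j0 + 1)) ^ (a - j0)"
proof -
  define \<rho> where "\<rho> = (real m - j0) / (j0 + 1)"
  have \<rho>: "0 \<le> \<rho>" "\<rho> \<le> 1"
    unfolding \<rho>_def using assms by (auto simp: divide_simps)
  have "(K choose j0) * (H choose (m - j0)) \<le> (\<Sum>k\<le>m. (K choose k) * (H choose (m - k)))"
    by (rule member_le_sum) (use assms in auto)
  then have "(K choose j0) * (H choose (m - j0)) \<le> (K + H) choose m"
    by (simp add: vandermonde)
  then have central: "real ((K choose j0) * (H choose (m - j0))) \<le> real ((K + H) choose m)"
    by (simp only: of_nat_le_iff)
  have "real (\<Sum>j = a..m. (K choose j) * (H choose (m - j)))
      \<le> (\<Sum>j = a..m. real ((K + H) choose m) * \<rho> ^ (a - j0))"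
    unfolding of_nat_sum
  proof (rule sum_mono)
    fix j assume j: "j \<in> {a..m}"
    have "real ((K choose j) * (H choose (m - j)))
        \<le> real ((K choose j0) * (H choose (m - j0))) * \<rho> ^ (j - j0)"
      unfolding \<rho>_def using binomial_product_le_geometric[of K H m j0 j] assms j by auto
    also have "\<dots> \<le> real ((K + H) choose m) * \<rho> ^ (a - j0)"
      using central \<rho> j by (intro mult_mono power_decreasing) auto
    finally show "real ((K choose j) * (H choose (m - j))) \<le> real ((K + H) choose m) * \<rho> ^ (a - j0)" .
  qed
  also have "\<dots> = card {a..m} * (real ((K + H) choose m) * \<rho> ^ (a - j0))"
    by simp
  also have "\<dots> \<le> (real m + 1) * (real ((K + H) choose m) * \<rho> ^ (a - j0))"
    using \<rho> by (intro mult_right_mono) auto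
  finally show ?thesis
    unfolding \<rho>_def by (simp only: mult.assoc)
qed

lemma ratio_power_le_exp:
  fixes m j0 n :: nat and s :: real
  assumes "j0 \<le> m" "s \<le> 2 * real j0 + 1 - m" "s \<ge> 0"
  shows "((real m - j0) / (j0 + 1)) ^ n \<le> exp (- (n * s) / (real m + 1))"
proof -
  define x where "x = (2 * real j0 + 1 - m) / (j0 + 1)"
  have "(real m - j0) / (j0 + 1) = 1 - x" "0 \<le> 1 - x"
    unfolding x_def using assms(1) by (simp_all add: field_simps)
  moreover have "1 - x \<le> exp (- x)"
    using exp_ge_add_one_self[of "- x"] by simp
  ultimately have "((real m - j0) / (j0 + 1)) ^ n \<le> exp (- x) ^ n"
    by (simp add: power_mono)
  also have "\<dots> = exp (- (n * x))"
    by (simp flip: exp_of_nat_mult)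
  also have "\<dots> \<le> exp (- (n * s) / (real m + 1))"
  proof -
    have "s / (real m + 1) \<le> s / (j0 + 1)"
      using assms by (intro divide_left_mono) auto
    also have "\<dots> \<le> x"
      unfolding x_def using assms by (intro divide_right_mono) auto
    finally have "s / (real m + 1) \<le> x" .
    then have "real n * (s / (real m + 1)) \<le> real n * x"
      by (rule mult_left_mono) simp
    then show ?thesis
      by simp
  qed
  finally show ?thesis .
qed

lemma binomial_product_tail_le_exp:
  fixes K H m a :: nat and t :: real
  assumes "K \<le> H + 2" "t \<ge> 5" and a: "real a \<ge> (real m - 1) / 2 + t"
  shows "real (\<Sum>j = a..m. (K choose j) * (H choose (m - j)))
    \<le> (real m + 1) * real ((K + H) choose m) * exp (- (2 * t\<^sup>2) / (9 * (real m + 1)))"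
proof (cases "a \<le> m")
  case False
  then show ?thesis
    by simp
next
  case True
  \<comment> \<open>from j0 on the terms decay geometrically, and a - j0 \<ge> t/3 decay steps remain\<close>
  define j0 where "j0 = nat \<lceil>real m / 2 + t / 3\<rceil>"
  have j0: "real j0 \<ge> real m / 2 + t / 3" "real j0 < real m / 2 + t / 3 + 1"
    unfolding j0_def using assms(2) by linarith+
  have "m + 1 \<le> 2 * j0"
    using j0(1) assms(2) by linarith
  have "real j0 \<le> real a"
    using j0(2) assms(2) a by (simp add: field_simps)
  then have "j0 \<le> a" "real (a - j0) \<ge> t / 3"
    using j0(2) a assms(2) by (simp_all add: of_nat_diff field_simps)
  define \<rho> where "\<rho> = (real m - j0) / (j0 + 1)"
  have "real (\<Sum>j = a..m. (K choose j) * (H choose (m - j)))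
      \<le> (real m + 1) * real ((K + H) choose m) * \<rho> ^ (a - j0)"
    unfolding \<rho>_def using assms(1) \<open>m + 1 \<le> 2 * j0\<close> \<open>j0 \<le> a\<close> True
    by (rule binomial_product_tail_le_geometric)
  also have "\<dots> \<le> (real m + 1) * real ((K + H) choose m) * exp (- (2 * t\<^sup>2) / (9 * (real m + 1)))"
  proof -
    have "\<rho> ^ (a - j0) \<le> exp (- (real (a - j0) * (2 * t / 3)) / (real m + 1))"
      unfolding \<rho>_def using j0 True \<open>j0 \<le> a\<close> assms(2) by (intro ratio_power_le_exp) auto
    also have "\<dots> \<le> exp (- (2 * t\<^sup>2) / (9 * (real m + 1)))"
    proof -
      have "t / 3 * (2 * t / 3) \<le> real (a - j0) * (2 * t / 3)"
        using \<open>real (a - j0) \<ge> t / 3\<close> assms(2) by (intro mult_right_mono) auto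
      then have "2 * t\<^sup>2 / 9 / (real m + 1) \<le> real (a - j0) * (2 * t / 3) / (real m + 1)"
        by (intro divide_right_mono) (auto simp: power2_eq_square)
      then show ?thesis
        by simp
    qed
    finally show ?thesis
      by (intro mult_left_mono) auto
  qed
  finally show ?thesis .
qed

section \<open>Counting permutations by the entries in a window\<close>

lemma card_permutations_of_set_prefix_le:
  assumes "finite S" "m \<le> card S"
  shows "card {xs \<in> permutations_of_set S. Q (set (take m xs))}
         \<le> card {T. T \<subseteq> S \<and> card T = m \<and> Q T} * (fact m * fact (card S - m))"
proof -
  let ?Ts = "{T. T \<subseteq> S \<and> card T = m \<and> Q T}"
  let ?split = "\<lambda>xs. (set (take m xs), take m xs, drop m xs)"
  have fin: "finite ?Ts"
    using assms(1) by (auto intro: finite_subset[of _ "Pow S"])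
  have "card {xs \<in> permutations_of_set S. Q (set (take m xs))}
      \<le> card (SIGMA T:?Ts. permutations_of_set T \<times> permutations_of_set (S - T))"
  proof (rule card_inj_on_le[of ?split])
    show "inj_on ?split {xs \<in> permutations_of_set S. Q (set (take m xs))}"
      by (rule inj_onI) (metis append_take_drop_id prod.inject)
    have "?split xs \<in> (SIGMA T:?Ts. permutations_of_set T \<times> permutations_of_set (S - T))"
      if "xs \<in> permutations_of_set S" "Q (set (take m xs))" for xs
    proof -
      have xs: "set xs = S" "distinct xs" "Q (set (take m xs))"
        using that by (auto simp: permutations_of_set_def)
      have "length xs = card S"
        using distinct_card[OF xs(2)] xs(1) by simp
      then have "set (take m xs) \<in> ?Ts"
        using xs assms(2) set_take_subset[of m xs] by (simp add: distinct_card)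
      moreover have "set (take m xs) \<inter> set (drop m xs) = {}" "set xs = set (take m xs) \<union> set (drop m xs)"
        using xs(2) distinct_append[of "take m xs" "drop m xs"] by (simp_all flip: set_append)
      then have "set (drop m xs) = S - set (take m xs)"
        using xs(1) by blast
      ultimately show ?thesis
        using xs(2) by (auto simp: permutations_of_set_def)
    qed
    then show "?split ` {xs \<in> permutations_of_set S. Q (set (take m xs))}
        \<subseteq> (SIGMA T:?Ts. permutations_of_set T \<times> permutations_of_set (S - T))"
      by blast
  qed (use fin in auto)
  also have "\<dots> = (\<Sum>T\<in>?Ts. card (permutations_of_set T \<times> permutations_of_set (S - T)))"
    using fin by simp
  also have "\<dots> = (\<Sum>T\<in>?Ts. fact m * fact (card S - m))"
  proof (rule sum.cong)
    fix T assume "T \<in> ?Ts"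
    moreover have "finite T"
      using \<open>T \<in> ?Ts\<close> assms(1) finite_subset by blast
    ultimately show "card (permutations_of_set T \<times> permutations_of_set (S - T)) = fact m * fact (card S - m)"
      using assms(1) by (simp add: card_cartesian_product card_Diff_subset)
  qed simp
  also have "\<dots> = card ?Ts * (fact m * fact (card S - m))"
    by simp
  finally show ?thesis .
qed

lemma card_subsets_inter_ge_le:
  assumes "finite S" "L \<subseteq> S"
  shows "card {T. T \<subseteq> S \<and> card T = m \<and> a \<le> card (L \<inter> T)}
    \<le> (\<Sum>j = a..m. (card L choose j) * (card (S - L) choose (m - j)))"
proof -
  let ?G = "\<lambda>j. (\<lambda>(A, B). A \<union> B) `
    ({A. A \<subseteq> L \<and> card A = j} \<times> {B. B \<subseteq> S - L \<and> card B = m - j})"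
  have finL: "finite L"
    using assms finite_subset by blast
  have cover: "{T. T \<subseteq> S \<and> card T = m \<and> a \<le> card (L \<inter> T)} \<subseteq> (\<Union>j\<in>{a..m}. ?G j)"
  proof
    fix T assume "T \<in> {T. T \<subseteq> S \<and> card T = m \<and> a \<le> card (L \<inter> T)}"
    then have T: "T \<subseteq> S" "card T = m" "a \<le> card (L \<inter> T)"
      by auto
    have "card T = card (L \<inter> T) + card (T - L)"
      using card_Int_Diff[of T L] T(1) assms(1) finite_subset by (auto simp: Int_commute)
    then have "(L \<inter> T, T - L) \<in> {A. A \<subseteq> L \<and> card A = card (L \<inter> T)} \<times>
        {B. B \<subseteq> S - L \<and> card B = m - card (L \<inter> T)}" and "card (L \<inter> T) \<in> {a..m}"
      using T by auto
    moreover have "T = (L \<inter> T) \<union> (T - L)"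
      by blast
    ultimately show "T \<in> (\<Union>j\<in>{a..m}. ?G j)"
      by blast
  qed
  have "card {T. T \<subseteq> S \<and> card T = m \<and> a \<le> card (L \<inter> T)} \<le> card (\<Union>j\<in>{a..m}. ?G j)"
    using cover finL assms(1) by (intro card_mono) auto
  also have "\<dots> \<le> (\<Sum>j = a..m. card (?G j))"
    by (rule card_UN_le) simp
  also have "\<dots> \<le> (\<Sum>j = a..m. (card L choose j) * (card (S - L) choose (m - j)))"
  proof (rule sum_mono)
    fix j
    have "card (?G j) \<le> card ({A. A \<subseteq> L \<and> card A = j} \<times> {B. B \<subseteq> S - L \<and> card B = m - j})"
      by (rule card_image_le) (use finL assms(1) in auto)
    also have "\<dots> = (card L choose j) * (card (S - L) choose (m - j))"
      using finL assms(1) by (simp add: card_cartesian_product n_subsets)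
    finally show "card (?G j) \<le> (card L choose j) * (card (S - L) choose (m - j))" .
  qed
  finally show ?thesis .
qed

lemma card_permutations_of_set_prefix_tail_le:
  fixes t :: real
  assumes "finite S" "L \<subseteq> S" "card L \<le> card (S - L) + 2" "m \<le> card S" "t \<ge> 5"
    and "real a \<ge> (real m - 1) / 2 + t"
  shows "real (card {xs \<in> permutations_of_set S. a \<le> card (L \<inter> set (take m xs))})
    \<le> fact (card S) * (real m + 1) * exp (- (2 * t\<^sup>2) / (9 * (real m + 1)))"
proof -
  define d K H where "d = card S" and "K = card L" and "H = card (S - L)"
  define E where "E = exp (- (2 * t\<^sup>2) / (9 * (real m + 1)))"
  have KH: "K + H = d"
    unfolding K_def H_def d_def using assms(1,2) card_Diff_subset[of L S] card_mono[of S L]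
    by (simp add: finite_subset)
  have "card {xs \<in> permutations_of_set S. a \<le> card (L \<inter> set (take m xs))}
      \<le> card {T. T \<subseteq> S \<and> card T = m \<and> a \<le> card (L \<inter> T)} * (fact m * fact (d - m))"
    unfolding d_def by (rule card_permutations_of_set_prefix_le[OF assms(1,4)])
  also have "\<dots> \<le> (\<Sum>j = a..m. (K choose j) * (H choose (m - j))) * (fact m * fact (d - m))"
    unfolding K_def H_def by (intro mult_right_mono card_subsets_inter_ge_le assms) auto
  finally have "real (card {xs \<in> permutations_of_set S. a \<le> card (L \<inter> set (take m xs))})
      \<le> real ((\<Sum>j = a..m. (K choose j) * (H choose (m - j))) * (fact m * fact (d - m)))"
    by (simp only: of_nat_le_iff)
  also have "\<dots> = real (\<Sum>j = a..m. (K choose j) * (H choose (m - j))) * (fact m * fact (d - m))"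
    by simp
  also have "\<dots> \<le> ((real m + 1) * real (d choose m) * E) * (fact m * fact (d - m))"
    unfolding E_def KH[symmetric] using assms(3,5,6) unfolding K_def H_def
    by (intro mult_right_mono binomial_product_tail_le_exp) auto
  also have "\<dots> = (fact m * fact (d - m) * real (d choose m)) * (real m + 1) * E"
    by (simp only: ac_simps)
  also have "fact m * fact (d - m) * real (d choose m) = fact d"
    using arg_cong[OF binomial_fact_lemma[of m d], of real] assms(4) unfolding d_def by simp
  finally show ?thesis
    unfolding d_def E_def .
qed

lemma card_permutations_of_set_drop_le:
  assumes "k + m \<le> card S"
  shows "card {xs \<in> permutations_of_set S. Q (set (take m (drop k xs)))}
       \<le> card {xs \<in> permutations_of_set S. Q (set (take m xs))}"
proof (rule card_inj_on_le[of "rotate k"])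
  have "inj (rotate k)"
    unfolding rotate_def by (simp add: inj_rotate1)
  then show "inj_on (rotate k) {xs \<in> permutations_of_set S. Q (set (take m (drop k xs)))}"
    by (rule inj_on_subset) simp
  have "rotate k xs \<in> {xs \<in> permutations_of_set S. Q (set (take m xs))}"
    if xs: "xs \<in> permutations_of_set S" "Q (set (take m (drop k xs)))" for xs
  proof -
    have "length xs = card S"
      using xs(1) by (rule length_finite_permutations_of_set)
    then have "take m (rotate k xs) = take m (drop k xs)"
      using assms by (cases "m = 0") (simp_all add: rotate_drop_take)
    moreover have "rotate k xs \<in> permutations_of_set S"
      using xs(1) by (simp add: permutations_of_set_def)
    ultimately show ?thesis
      using xs(2) by simp
  qed
  then show "rotate k ` {xs \<in> permutations_of_set S. Q (set (take m (drop k xs)))}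
      \<subseteq> {xs \<in> permutations_of_set S. Q (set (take m xs))}"
    by blast
qed simp

section \<open>Blocks and the median\<close>

lemma blksz_pos: "d > 0 \<Longrightarrow> blksz d > 0"
  unfolding blksz_def by simp

lemma blksz_bounds:
  "real d powr (2 / 3) \<le> real (blksz d)" "real (blksz d) < real d powr (2 / 3) + 1"
proof -
  have "real (blksz d) = of_int \<lceil>real d powr (2 / 3)\<rceil>"
    unfolding blksz_def by simp
  then show "real d powr (2 / 3) \<le> real (blksz d)" "real (blksz d) < real d powr (2 / 3) + 1"
    by linarith+
qed

lemma win_hi_ge:
  "real (nat (win_hi \<gamma> d)) \<ge> (real (blksz d) - 1) / 2 + real d powr (1 / 3 + \<gamma>)"
proof -
  have hi: "real_of_int (win_hi \<gamma> d) \<ge> real d powr (2 / 3) / 2 + real d powr (1 / 3 + \<gamma>)"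
    unfolding win_hi_def by linarith
  then have "real_of_int (win_hi \<gamma> d) \<ge> 0"
    using powr_ge_zero[of "real d" "2 / 3"] powr_ge_zero[of "real d" "1 / 3 + \<gamma>"] by linarith
  then have eq: "real (nat (win_hi \<gamma> d)) = real_of_int (win_hi \<gamma> d)"
    by simp
  show ?thesis
    unfolding eq using hi blksz_bounds(2)[of d] by argo
qed

lemma blksz_minus_win_lo_ge:
  "real (nat (int (blksz d) + 2 - win_lo \<gamma> d)) \<ge> (real (blksz d) - 1) / 2 + real d powr (1 / 3 + \<gamma>)"
proof -
  have lo: "real_of_int (win_lo \<gamma> d) \<le> real d powr (2 / 3) / 2 - real d powr (1 / 3 + \<gamma>)"
    unfolding win_lo_def by linarith
  then have "real (blksz d) + 2 - real_of_int (win_lo \<gamma> d) \<ge> 0"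
    using blksz_bounds(1)[of d] powr_ge_zero[of "real d" "1 / 3 + \<gamma>"] by linarith
  then have eq: "real (nat (int (blksz d) + 2 - win_lo \<gamma> d))
      = real (blksz d) + 2 - real_of_int (win_lo \<gamma> d)"
    by simp
  show ?thesis
    unfolding eq using lo blksz_bounds(1)[of d] by argo
qed

lemma Suc_times_blksz_le:
  assumes "i + 1 < nblocks d"
  shows "(i + 1) * blksz d \<le> d"
proof -
  have "blksz d > 0"
    using assms unfolding nblocks_def by (cases "blksz d = 0") auto
  moreover have "i + 2 \<le> (d + blksz d - 1) div blksz d"
    using assms unfolding nblocks_def by simp
  ultimately have "(i + 2) * blksz d \<le> d + blksz d - 1"
    by (simp add: less_eq_div_iff_mult_less_eq)
  then show ?thesis
    by (simp add: algebra_simps)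
qed

lemma nblocks_le: "nblocks d \<le> d"
proof (cases "d = 0")
  case True
  then show ?thesis
    by (simp add: nblocks_def blksz_def)
next
  case False
  then have "blksz d > 0"
    by (simp add: blksz_pos)
  then have "d + blksz d - 1 < (d + 1) * blksz d"
    using False by (cases "blksz d") auto
  then have "(d + blksz d - 1) div blksz d < d + 1"
    by (rule less_mult_imp_div_less)
  then show ?thesis
    unfolding nblocks_def by simp
qed

lemma length_blk:
  assumes "i + 1 < nblocks (length xs)"
  shows "length (blk xs i) = blksz (length xs)"
  using Suc_times_blksz_le[OF assms] unfolding blk_def by simp

lemma nth_mem_blk:
  assumes "p < length xs"
  defines "i \<equiv> p div blksz (length xs)"
  shows "i < nblocks (length xs)" "xs ! p \<in> set (blk xs i)"
proof -
  let ?m = "blksz (length xs)"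
  have m: "?m > 0"
    using assms(1) by (intro blksz_pos) linarith
  have "p div ?m \<le> (length xs - 1) div ?m"
    using assms(1) by (intro div_le_mono) auto
  also have "\<dots> < (length xs - 1 + ?m) div ?m"
    using m by simp
  also have "length xs - 1 + ?m = length xs + ?m - 1"
    using assms(1) by simp
  finally show "i < nblocks (length xs)"
    unfolding i_def nblocks_def .
  have "p = i * ?m + p mod ?m" "p mod ?m < ?m"
    unfolding i_def using m by simp_all
  then have "i * ?m \<le> p" "p < i * ?m + ?m"
    by linarith+
  then have "take ?m (drop (i * ?m) xs) ! (p - i * ?m) = xs ! p"
    "p - i * ?m < length (take ?m (drop (i * ?m) xs))"
    using assms(1) by auto
  then show "xs ! p \<in> set (blk xs i)"
    unfolding blk_def by (metis nth_mem)
qed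

lemma card_permutations_of_set_blk_tail_le:
  fixes S :: "real set" and t :: real
  defines "m \<equiv> blksz (card S)"
  assumes "finite S" "L \<subseteq> S" "card L \<le> card (S - L) + 2" "i + 1 < nblocks (card S)" "t \<ge> 5"
    and "real a \<ge> (real m - 1) / 2 + t"
  shows "real (card {xs \<in> permutations_of_set S. a \<le> card (L \<inter> set (blk xs i))})
    \<le> fact (card S) * (real m + 1) * exp (- (2 * t\<^sup>2) / (9 * (real m + 1)))"
proof -
  have "i * m + m \<le> card S"
    using Suc_times_blksz_le[OF assms(5)] unfolding m_def by (simp add: algebra_simps)
  have "{xs \<in> permutations_of_set S. a \<le> card (L \<inter> set (blk xs i))}
      = {xs \<in> permutations_of_set S. a \<le> card (L \<inter> set (take m (drop (i * m) xs)))}"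
    unfolding blk_def m_def by (auto simp: length_finite_permutations_of_set)
  also have "card \<dots> \<le> card {xs \<in> permutations_of_set S. a \<le> card (L \<inter> set (take m xs))}"
    using \<open>i * m + m \<le> card S\<close> by (rule card_permutations_of_set_drop_le)
  finally have "real (card {xs \<in> permutations_of_set S. a \<le> card (L \<inter> set (blk xs i))})
      \<le> real (card {xs \<in> permutations_of_set S. a \<le> card (L \<inter> set (take m xs))})"
    by (rule of_nat_mono)
  also have "\<dots> \<le> fact (card S) * (real m + 1) * exp (- (2 * t\<^sup>2) / (9 * (real m + 1)))"
    using assms(2-4,6,7) \<open>i * m + m \<le> card S\<close>
    by (intro card_permutations_of_set_prefix_tail_le) auto
  finally show ?thesis .
qed

lemma card_less_nth_sorted_list_of_set:
  fixes S :: "'a::linorder set"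
  assumes "finite S" "i < card S"
  shows "card {u \<in> S. u < sorted_list_of_set S ! i} = i"
proof -
  let ?xs = "sorted_list_of_set S"
  have xs: "sorted_wrt (<) ?xs" "distinct ?xs" "set ?xs = S" "length ?xs = card S"
    using assms(1) by auto
  have less_iff: "?xs ! j < ?xs ! i \<longleftrightarrow> j < i" if "j < card S" for j
    using sorted_wrt_nth_less[OF xs(1), of j i] sorted_wrt_nth_less[OF xs(1), of i j] that assms(2) xs(4)
    by (cases j i rule: linorder_cases) auto
  have "{u \<in> S. u < ?xs ! i} = (\<lambda>j. ?xs ! j) ` {..<i}"
  proof (intro equalityI subsetI)
    fix u assume "u \<in> {u \<in> S. u < ?xs ! i}"
    then obtain j where "j < card S" "u = ?xs ! j" "u < ?xs ! i"
      using xs(3,4) by (metis (no_types, lifting) in_set_conv_nth mem_Collect_eq)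
    then show "u \<in> (\<lambda>j. ?xs ! j) ` {..<i}"
      using less_iff by auto
  next
    fix u assume "u \<in> (\<lambda>j. ?xs ! j) ` {..<i}"
    then show "u \<in> {u \<in> S. u < ?xs ! i}"
      using less_iff xs(3,4) assms(2) by (auto intro: nth_mem)
  qed
  moreover have "inj_on (\<lambda>j. ?xs ! j) {..<i}"
    using xs(2,4) assms(2) by (auto intro: inj_on_nth)
  ultimately show ?thesis
    by (simp add: card_image)
qed

lemma inj_on_card_less:
  fixes S :: "'a::linorder set"
  assumes "finite S"
  shows "inj_on (\<lambda>v. card {u \<in> S. u < v}) S"
proof -
  have less: "card {u \<in> S. u < v} < card {u \<in> S. u < w}" if "v < w" "v \<in> S" for v w
    using that assms by (intro psubset_card_mono) auto
  show ?thesis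
  proof (rule inj_onI)
    fix v w assume "v \<in> S" "w \<in> S" "card {u \<in> S. u < v} = card {u \<in> S. u < w}"
    then show "v = w"
      using less[of v w] less[of w v] by (cases v w rule: linorder_cases) auto
  qed
qed

lemma med_permutations_of_set:
  assumes "xs \<in> permutations_of_set S"
  shows "med xs = sorted_list_of_set S ! ((card S - 1) div 2)"
proof -
  have xs: "set xs = S" "distinct xs"
    using assms by (auto simp: permutations_of_set_def)
  then have "sort xs = sorted_list_of_set S"
    by (metis distinct_remdups_id sorted_list_of_set_sort_remdups)
  moreover have "length xs = card S"
    using distinct_card[OF xs(2)] xs(1) by simp
  ultimately show ?thesis
    unfolding med_def by simp
qed

lemma
  assumes "xs \<in> permutations_of_set S" "S \<noteq> {}"
  shows med_mem_permutations_of_set: "med xs \<in> S"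
    and card_less_med: "card {u \<in> S. u < med xs} = (card S - 1) div 2"
proof -
  have fin: "finite S"
    using assms(1) permutations_of_setD(1) by blast
  have "card S > 0"
    using assms(2) fin by (simp add: card_gt_0_iff)
  then have i: "(card S - 1) div 2 < card S"
    by linarith
  show "med xs \<in> S"
    unfolding med_permutations_of_set[OF assms(1)]
    using i fin by (metis nth_mem set_sorted_list_of_set length_sorted_list_of_set)
  show "card {u \<in> S. u < med xs} = (card S - 1) div 2"
    unfolding med_permutations_of_set[OF assms(1)]
    using card_less_nth_sorted_list_of_set[OF fin i] .
qed

lemma card_less_median_balanced:
  fixes S :: "'a::linorder set"
  assumes "finite S" "S \<noteq> {}"
  defines "L \<equiv> {u \<in> S. u < sorted_list_of_set S ! ((card S - 1) div 2)}"
  shows "card L \<le> card (S - L) + 2" "card (S - L) \<le> card L + 2"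
proof -
  have "card S > 0"
    using assms(1,2) by (simp add: card_gt_0_iff)
  then have "card L = (card S - 1) div 2"
    unfolding L_def by (intro card_less_nth_sorted_list_of_set assms(1)) linarith
  moreover have "card (S - L) = card S - card L"
    using assms(1) by (intro card_Diff_subset) (auto simp: L_def finite_subset)
  ultimately show "card L \<le> card (S - L) + 2" "card (S - L) \<le> card L + 2"
    by presburger+
qed

lemma set_blk_subset: "set (blk xs i) \<subseteq> set xs"
  unfolding blk_def by (meson set_drop_subset set_take_subset subset_trans)

lemma set_yblk_subset: "set (yblk \<gamma> xs i) \<subseteq> set xs"
  unfolding yblk_def using set_blk_subset by auto

lemma proc_output_eq_med:
  assumes "xs \<in> permutations_of_set S" "successful \<gamma> xs"
  shows "proc_output \<gamma> xs = Some (med xs)"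
proof -
  have xs: "set xs = S" "length xs = card S"
    using assms(1) length_finite_permutations_of_set by (auto simp: permutations_of_set_def)
  define ys where "ys = concat (map (yblk \<gamma> xs) [0..<nblocks (length xs)])"
  define P where "P = (\<lambda>v. card {u \<in> set xs. u < v} = (length xs + 1) div 2 - 1)"
  have med_ys: "med xs \<in> set ys"
    using assms(2) unfolding successful_def ys_def by auto
  have ys_S: "set ys \<subseteq> S"
    unfolding ys_def using set_yblk_subset xs(1) by fastforce
  then have S: "S \<noteq> {}"
    using med_ys by auto
  have "(length xs + 1) div 2 - 1 = (card S - 1) div 2"
    using xs(2) S by (cases "length xs") auto
  then have P_med: "P (med xs)"
    unfolding P_def xs(1) using card_less_med[OF assms(1) S] by simp
  then obtain y where y: "find P ys = Some y"
    using med_ys by (metis find_None_iff option.exhaust)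
  then have "y \<in> S" "P y"
    using ys_S by (auto simp: find_Some_iff dest: nth_mem)
  then have "y = med xs"
    using inj_on_card_less[of S] P_med med_mem_permutations_of_set[OF assms(1) S] assms(1)
    unfolding P_def xs(1) inj_on_def by (auto dest: permutations_of_setD)
  then show ?thesis
    using y unfolding proc_output_def ys_def P_def by simp
qed

lemma not_successful_imp_unbalanced_block:
  assumes xs: "xs \<in> permutations_of_set S" and fail: "\<not> successful \<gamma> xs" and "S \<noteq> {}"
  defines "L \<equiv> {u \<in> S. u < sorted_list_of_set S ! ((card S - 1) div 2)}"
  shows "\<exists>i. i + 1 < nblocks (card S) \<and>
     (nat (win_hi \<gamma> (card S)) \<le> card (L \<inter> set (blk xs i)) \<or>
      nat (int (blksz (card S)) + 2 - win_lo \<gamma> (card S)) \<le> card ((S - L) \<inter> set (blk xs i)))"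
proof -
  have set_xs: "set xs = S" "distinct xs" and len: "length xs = card S"
    using xs length_finite_permutations_of_set by (auto simp: permutations_of_set_def)
  define M where "M = med xs"
  have L: "L = {u \<in> S. u < M}"
    unfolding L_def M_def med_permutations_of_set[OF xs] ..
  have "M \<in> S"
    unfolding M_def using med_mem_permutations_of_set[OF xs \<open>S \<noteq> {}\<close>] .
  then obtain p where p: "p < length xs" "xs ! p = M"
    using set_xs(1) by (metis in_set_conv_nth)
  define i where "i = p div blksz (length xs)"
  define B where "B = set (blk xs i)"
  have iq: "i < nblocks (length xs)" and MB: "M \<in> B"
    using nth_mem_blk[OF p(1)] p(2) unfolding i_def B_def by auto
  have "M \<notin> set (yblk \<gamma> xs i)"
    using fail iq unfolding successful_def M_def by blast
  then have iq': "i + 1 < nblocks (length xs)"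
    and out: "\<not> (win_lo \<gamma> (card S) \<le> int (rank_in (blk xs i) M) \<and>
                  int (rank_in (blk xs i) M) \<le> win_hi \<gamma> (card S))"
    using iq MB unfolding yblk_def B_def len by (auto split: if_splits)
  have BS: "B \<subseteq> S"
    unfolding B_def using set_blk_subset set_xs(1) by blast
  have "distinct (blk xs i)"
    unfolding blk_def using set_xs(2) by (simp add: distinct_drop distinct_take)
  then have card_B: "card B = blksz (card S)"
    unfolding B_def using length_blk[OF iq'] len by (simp add: distinct_card)
  have "{u \<in> B. u \<le> M} = insert M (L \<inter> B)" "M \<notin> L \<inter> B"
    using MB BS unfolding L by auto
  then have rank: "rank_in (blk xs i) M = card (L \<inter> B) + 1"
    unfolding rank_in_def B_def by simp
  have "card B = card (L \<inter> B) + card ((S - L) \<inter> B)"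
    using BS by (subst card_Un_disjoint[symmetric]) (auto simp: B_def intro: arg_cong[where f = card])
  then show ?thesis
    using iq' out rank card_B unfolding B_def len by (intro exI[of _ i]) auto
qed

section \<open>The probability of success\<close>

lemma card_not_successful_le:
  fixes S :: "real set"
  assumes "finite S" "card S = d" and t: "real d powr (1 / 3 + \<gamma>) \<ge> 5"
  defines "m \<equiv> blksz d" and "t \<equiv> real d powr (1 / 3 + \<gamma>)"
  shows "real (card {xs \<in> permutations_of_set S. \<not> successful \<gamma> xs})
    \<le> 2 * real d * (fact d * (real m + 1) * exp (- (2 * t\<^sup>2) / (9 * (real m + 1))))"
proof -
  define q P where "q = nblocks d" and "P = permutations_of_set S"
  define L where "L = {u \<in> S. u < sorted_list_of_set S ! ((d - 1) div 2)}"
  define aL aH where "aL = nat (win_hi \<gamma> d)" and "aH = nat (int m + 2 - win_lo \<gamma> d)"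
  define Bad where "Bad = (\<lambda>A a i. {xs \<in> P. a \<le> card (A \<inter> set (blk xs i))})"
  define B where "B = fact d * (real m + 1) * exp (- (2 * t\<^sup>2) / (9 * (real m + 1)))"
  have "d \<noteq> 0"
    using t by (cases "d = 0") auto
  then have "S \<noteq> {}"
    using assms(2) by auto
  have "{xs \<in> P. \<not> successful \<gamma> xs} \<subseteq> (\<Union>i<q - 1. Bad L aL i \<union> Bad (S - L) aH i)"
    using not_successful_imp_unbalanced_block[OF _ _ \<open>S \<noteq> {}\<close>, of _ \<gamma>] assms(2)
    unfolding Bad_def P_def q_def L_def aL_def aH_def m_def by fastforce
  then have "card {xs \<in> P. \<not> successful \<gamma> xs} \<le> card (\<Union>i<q - 1. Bad L aL i \<union> Bad (S - L) aH i)"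
    unfolding P_def Bad_def by (intro card_mono) auto
  also have "\<dots> \<le> (\<Sum>i<q - 1. card (Bad L aL i \<union> Bad (S - L) aH i))"
    by (rule card_UN_le) simp
  also have "\<dots> \<le> (\<Sum>i<q - 1. card (Bad L aL i) + card (Bad (S - L) aH i))"
    by (intro sum_mono card_Un_le)
  finally have "real (card {xs \<in> P. \<not> successful \<gamma> xs})
      \<le> (\<Sum>i<q - 1. real (card (Bad L aL i)) + real (card (Bad (S - L) aH i)))"
    by (simp only: of_nat_le_iff [symmetric, where 'a = real] of_nat_sum of_nat_add)
  also have "\<dots> \<le> (\<Sum>i<q - 1. B + B)"
  proof (intro sum_mono add_mono)
    fix i assume "i \<in> {..<q - 1}"
    then have i: "i + 1 < nblocks (card S)"
      unfolding q_def assms(2) by auto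
    have "L \<subseteq> S" "S - (S - L) = L"
      unfolding L_def by auto
    moreover have "card L \<le> card (S - L) + 2" "card (S - L) \<le> card L + 2"
      using card_less_median_balanced[OF assms(1) \<open>S \<noteq> {}\<close>] unfolding L_def assms(2) by auto
    moreover have "5 \<le> t" "(real m - 1) / 2 + t \<le> real aL" "(real m - 1) / 2 + t \<le> real aH"
      using t unfolding aL_def aH_def m_def t_def by (simp_all add: win_hi_ge blksz_minus_win_lo_ge)
    ultimately show "real (card (Bad L aL i)) \<le> B" "real (card (Bad (S - L) aH i)) \<le> B"
      using card_permutations_of_set_blk_tail_le[OF assms(1) _ _ i]
      unfolding Bad_def B_def P_def m_def assms(2) by auto
  qed
  also have "\<dots> = real (q - 1) * (2 * B)"
    by simp
  also have "\<dots> \<le> real d * (2 * B)"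
    using nblocks_le[of d] unfolding q_def B_def by (intro mult_right_mono) auto
  finally show ?thesis
    unfolding P_def B_def by (simp only: ac_simps)
qed

lemma exp_block_tail_le:
  assumes "real d powr (2 / 3) \<ge> 2"
  shows "(real (blksz d) + 1) * exp (- (2 * (real d powr (1 / 3 + \<gamma>))\<^sup>2) / (9 * (real (blksz d) + 1)))
    \<le> 2 * real d powr (2 / 3) * exp (- (real d powr (2 * \<gamma>)) / 9)"
proof -
  have "d > 0"
    using assms by (cases "d = 0") auto
  have m: "real (blksz d) + 1 \<le> 2 * real d powr (2 / 3)"
    using blksz_bounds(2)[of d] assms by linarith
  have "(real d powr (1 / 3 + \<gamma>))\<^sup>2 = real d powr (2 / 3) * real d powr (2 * \<gamma>)"
    using \<open>d > 0\<close> by (simp add: power2_eq_square flip: powr_add)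
  moreover have "real d powr (2 * \<gamma>) * (real (blksz d) + 1) \<le> real d powr (2 * \<gamma>) * (2 * real d powr (2 / 3))"
    using m by (intro mult_left_mono) auto
  ultimately have "real d powr (2 * \<gamma>) / 9 \<le> 2 * (real d powr (1 / 3 + \<gamma>))\<^sup>2 / (9 * (real (blksz d) + 1))"
    by (simp add: field_simps)
  then show ?thesis
    using m by (intro mult_mono) auto
qed

lemma successful_fraction_ge:
  fixes S :: "real set"
  assumes "finite S" "card S = d" and t: "real d powr (1 / 3 + \<gamma>) \<ge> 5"
    and D: "real d powr (2 / 3) \<ge> 2"
  shows "real (card {xs \<in> permutations_of_set S. successful \<gamma> xs}) / real (card (permutations_of_set S))
    \<ge> 1 - 4 * real d * real d powr (2 / 3) * exp (- (real d powr (2 * \<gamma>)) / 9)"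
proof -
  define P where "P = permutations_of_set S"
  define F where "F = 4 * real d * real d powr (2 / 3) * exp (- (real d powr (2 * \<gamma>)) / 9)"
  have "real (card {xs \<in> P. \<not> successful \<gamma> xs})
      \<le> 2 * real d * (fact d * (2 * real d powr (2 / 3) * exp (- (real d powr (2 * \<gamma>)) / 9)))"
    using card_not_successful_le[OF assms(1,2) t, folded P_def] exp_block_tail_le[OF D, of \<gamma>]
    by (elim order_trans) (intro mult_left_mono; simp add: mult.assoc)
  also have "\<dots> = fact d * F"
    unfolding F_def by (simp add: algebra_simps)
  finally have fail: "real (card {xs \<in> P. \<not> successful \<gamma> xs}) \<le> fact d * F" .
  have "card {xs \<in> P. successful \<gamma> xs} + card {xs \<in> P. \<not> successful \<gamma> xs} = card P"
    unfolding P_def by (subst card_Un_disjoint[symmetric]) (auto intro: arg_cong[where f = card])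
  also have "card P = fact d"
    unfolding P_def using assms(1,2) by simp
  finally have "real (card {xs \<in> P. successful \<gamma> xs}) = fact d - real (card {xs \<in> P. \<not> successful \<gamma> xs})"
    using arg_cong[of _ _ real] by fastforce
  then show ?thesis
    using fail \<open>card P = fact d\<close> unfolding P_def[symmetric] F_def[symmetric] by (simp add: field_simps)
qed

lemma eventually_failure_bound_small:
  fixes \<gamma> :: real
  assumes "\<gamma> > 0"
  shows "eventually (\<lambda>d. 5 \<le> real d powr (1 / 3 + \<gamma>) \<and> 2 \<le> real d powr (2 / 3) \<and>
      4 * real d * real d powr (2 / 3) * exp (- (real d powr (2 * \<gamma>)) / 9)
        \<le> exp (- (real d powr (2 * \<gamma>)) / 18)) sequentially"
proof -
  have "eventually (\<lambda>x. 5 \<le> x powr (1 / 3 + \<gamma>) \<and> 2 \<le> x powr (2 / 3) \<and>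
      4 * x * x powr (2 / 3) * exp (- (x powr (2 * \<gamma>)) / 9) \<le> exp (- (x powr (2 * \<gamma>)) / 18)) at_top"
    using assms by (intro eventually_conj) real_asymp+
  then show ?thesis
    by (rule eventually_compose_filterlim[OF _ filterlim_real_sequentially])
qed

theorem propositionC2:
  fixes \<gamma> :: real
  assumes "\<gamma> > 0"
  shows "(\<exists>c > 0. \<exists>d0 :: nat. \<forall>d \<ge> d0. \<forall>S :: real set.
            finite S \<and> S \<subseteq> {0<..<1} \<and> card S = d \<longrightarrow>
              real (card {xs \<in> permutations_of_set S. successful \<gamma> xs})
                / real (card (permutations_of_set S))
              \<ge> 1 - exp (- c * real d powr (2 * \<gamma>)))
         \<and> (\<forall>S :: real set. \<forall>xs. finite S \<and> S \<subseteq> {0<..<1} \<and> xs \<in> permutations_of_set S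
              \<and> successful \<gamma> xs \<longrightarrow> proc_output \<gamma> xs = Some (med xs))"
proof (intro conjI allI impI)
  obtain d0 where d0: "\<And>d. d \<ge> d0 \<Longrightarrow> 5 \<le> real d powr (1 / 3 + \<gamma>) \<and> 2 \<le> real d powr (2 / 3) \<and>
      4 * real d * real d powr (2 / 3) * exp (- (real d powr (2 * \<gamma>)) / 9)
        \<le> exp (- (real d powr (2 * \<gamma>)) / 18)"
    using eventually_failure_bound_small[OF assms] unfolding eventually_sequentially by blast
  show "\<exists>c > 0. \<exists>d0 :: nat. \<forall>d \<ge> d0. \<forall>S :: real set.
            finite S \<and> S \<subseteq> {0<..<1} \<and> card S = d \<longrightarrow>
              real (card {xs \<in> permutations_of_set S. successful \<gamma> xs})
                / real (card (permutations_of_set S))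
              \<ge> 1 - exp (- c * real d powr (2 * \<gamma>))"
  proof (intro exI[of _ "1 / 18"] exI[of _ d0] conjI allI impI)
    fix d :: nat and S :: "real set"
    assume "d0 \<le> d" "finite S \<and> S \<subseteq> {0<..<1} \<and> card S = d"
    then show "real (card {xs \<in> permutations_of_set S. successful \<gamma> xs}) / real (card (permutations_of_set S))
        \<ge> 1 - exp (- (1 / 18) * real d powr (2 * \<gamma>))"
      using successful_fraction_ge[of S d \<gamma>] d0[of d] by fastforce
  qed simp
next
  fix S :: "real set" and xs
  assume "finite S \<and> S \<subseteq> {0<..<1} \<and> xs \<in> permutations_of_set S \<and> successful \<gamma> xs"
  then show "proc_output \<gamma> xs = Some (med xs)"
    using proc_output_eq_med by blast
qed

end
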